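(* Denote the obtained long-term time-average aggregate EV power flexibility value $\mathcal{F}=\lim_{T\to\infty}\frac{1}{T}\sum_{t=1}^{T}\mathbb{E}[F_t]$ of the offline problem $\textbf{P1}$ and of the online problem $\textbf{P1}'$ by $\mathcal{F}^{off}$ and $\mathcal{F}^{*}$, respectively. Then $$0 \le -\mathcal{F}^{*} + \mathcal{F}^{off} \leq \frac{1}{V_1}A_1,$$ where $A_1$ is the constant $A_1 = \frac{1}{2}\sum_{g\in\mathcal{G}}(\hat{x}_{g,max}^2+\hat{a}_{g,max}^2)+\frac{1}{2}\sum_{g\in\mathcal{G}}(\check{x}_{g,max}^2+\check{a}_{g,max}^2)$.
   Context: A charging station (CS) serves EVs $v\in\mathcal{V}$, each with arrival time $t_v^a$, departure time $t_v^d$, initial energy $e_v^a$, required departure energy $e_v^d$, maximum charging power $\bar p_v$, charging efficiency $\eta_c$, energy bounds $[\underline e_v,\bar e_v]$. The per-slot flexibility value is $F_t=(\pi_t^e+\pi_t^c\rho_t)(\hat p_{d,t}-\check p_{d,t})$, with electricity price $\pi_t^e$, carbon price $\pi_t^c$, grid carbon intensity $\rho_t$ (write $\pi_t=\pi_t^e+\pi_t^c\rho_t$), and $\hat p_{d,t},\check p_{d,t}$ the upper/lower aggregate charging-power trajectories. EVs are grouped into $G$ groups $g\in\mathcal{G}$ by charging delay; decision variables $\hat x_{g,t},\check x_{g,t}$ are group upper/lower charging powers with $\hat p_{d,t}=\sum_g\hat x_{g,t}$, $\check p_{d,t}=\sum_g\check x_{g,t}$. $\textbf{P1}$ (offline,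 with full knowledge of future uncertainties) is: minimize $\lim_{T\to\infty}\frac1T\sum_{t=1}^T\mathbb{E}[-F_t]$ subject to the time-average constraints $\lim_{T\to\infty}\frac1T\sum_{t}\mathbb{E}[\hat a_{g,t}-\hat x_{g,t}]\le 0$ and $\lim_{T\to\infty}\frac1T\sum_t\mathbb{E}[\check a_{g,t}-\check x_{g,t}]\le 0$ for all $g$, and $0\le \hat x_{g,t}\le x_{g,max}$, $0\le\check x_{g,t}\le x_{g,max}$, $\hat x_{g,t}\ge\check x_{g,t}$, where $\hat a_{g,t},\check a_{g,t}$ are upper/lower aggregate arriving charging demands of group $g$ and $x_{g,max}=\sum_{v\in\mathcal{V}_g}\bar p_v$. Charging queues are $\hat Q_{g,t+1}=\max[\hat Q_{g,t}-\hat x_{g,t},0]+\hat a_{g,t}$, $\check Q_{g,t+1}=\max[\check Q_{g,t}-\check x_{g,t},0]+\check a_{g,t}$, with $\hat Q_{g,1}=\check Q_{g,1}=0$. The online problem $\textbf{P1}'$ (Lyapunov drift-plus-penalty with weight $V_1>0$) solved at each slot $t$ given current queues is: minimize $\sum_{g}(-V_1\pi_t-\hat Q_{g,t})\hat x_{g,t}+(V_1\pi_t-\check Q_{g,t})\check x_{g,t}$ subject to $0\le \hat x_{g,t}\le x_{g,max}$, $0\le\check x_{g,t}\le x_{g,max}$, $\hat x_{g,t}\ge\check x_{g,t}$. In $A_1$, $\hat x_{g,max},\check x_{g,max}$ and $\hat a_{g,max},\check a_{g,max}$ are upper bounds on the group charging powers and arriving demands. *)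

theory Defs
  imports "HOL-Probability.Probability"
begin

text \<open>Time slots are t = 1, 2, ...; the value at index 0 is an unused placeholder.
  Charging queue: Q_1 = 0, Q_{t+1} = max(Q_t - x_t, 0) + a_t.\<close>
fun queue :: "(nat \<Rightarrow> real) \<Rightarrow> (nat \<Rightarrow> real) \<Rightarrow> nat \<Rightarrow> real" where
  "queue x a 0 = 0"
| "queue x a (Suc t) = (if t = 0 then 0 else max (queue x a t - x t) 0 + a t)"

definition price :: "('s \<Rightarrow> real) \<Rightarrow> ('s \<Rightarrow> real) \<Rightarrow> ('s \<Rightarrow> real) \<Rightarrow> 's \<Rightarrow> real" where
  "price pe pc rho s = pe s + pc s * rho s"

definition xmax :: "'v set \<Rightarrow> ('v \<Rightarrow> 'g) \<Rightarrow> ('v \<Rightarrow> real) \<Rightarrow> 'g \<Rightarrow> real" where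
  "xmax EV grp pbar g = (\<Sum>v\<in>{v\<in>EV. grp v = g}. pbar v)"

definition feasible_action :: "('g \<Rightarrow> real) \<Rightarrow> ('g \<Rightarrow> real) \<Rightarrow> ('g \<Rightarrow> real) \<Rightarrow> bool" where
  "feasible_action xm yh yc \<longleftrightarrow>
     (\<forall>g. 0 \<le> yh g \<and> yh g \<le> xm g \<and> 0 \<le> yc g \<and> yc g \<le> xm g \<and> yc g \<le> yh g)"

definition flex :: "real \<Rightarrow> ('g::finite \<Rightarrow> real) \<Rightarrow> ('g \<Rightarrow> real) \<Rightarrow> real" where
  "flex p yh yc = p * ((\<Sum>g\<in>UNIV. yh g) - (\<Sum>g\<in>UNIV. yc g))"

definition avg_flex ::
  "'w measure \<Rightarrow> ('s \<Rightarrow> real) \<Rightarrow> (nat \<Rightarrow> 'w \<Rightarrow> 's) \<Rightarrow>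
   ('g::finite \<Rightarrow> nat \<Rightarrow> 'w \<Rightarrow> real) \<Rightarrow> ('g \<Rightarrow> nat \<Rightarrow> 'w \<Rightarrow> real) \<Rightarrow> nat \<Rightarrow> real" where
  "avg_flex M pr W xh xc T =
     (\<Sum>t=1..T. integral\<^sup>L M (\<lambda>\<omega>. flex (pr (W t \<omega>)) (\<lambda>g. xh g t \<omega>) (\<lambda>g. xc g t \<omega>))) / real T"

definition flex_value ::
  "'w measure \<Rightarrow> ('s \<Rightarrow> real) \<Rightarrow> (nat \<Rightarrow> 'w \<Rightarrow> 's) \<Rightarrow>
   ('g::finite \<Rightarrow> nat \<Rightarrow> 'w \<Rightarrow> real) \<Rightarrow> ('g \<Rightarrow> nat \<Rightarrow> 'w \<Rightarrow> real) \<Rightarrow> ereal" where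
  "flex_value M pr W xh xc = liminf (\<lambda>T. ereal (avg_flex M pr W xh xc T))"

definition avg_gap ::
  "'w measure \<Rightarrow> ('s \<Rightarrow> real) \<Rightarrow> (nat \<Rightarrow> 'w \<Rightarrow> 's) \<Rightarrow> (nat \<Rightarrow> 'w \<Rightarrow> real) \<Rightarrow> nat \<Rightarrow> real" where
  "avg_gap M a W x T = (\<Sum>t=1..T. integral\<^sup>L M (\<lambda>\<omega>. a (W t \<omega>) - x t \<omega>)) / real T"

definition avg_constraints ::
  "'w measure \<Rightarrow> (nat \<Rightarrow> 'w \<Rightarrow> 's) \<Rightarrow> ('g \<Rightarrow> 's \<Rightarrow> real) \<Rightarrow> ('g \<Rightarrow> 's \<Rightarrow> real) \<Rightarrow>
   ('g \<Rightarrow> nat \<Rightarrow> 'w \<Rightarrow> real) \<Rightarrow> ('g \<Rightarrow> nat \<Rightarrow> 'w \<Rightarrow> real) \<Rightarrow> bool" where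
  "avg_constraints M W ah ac xh xc \<longleftrightarrow>
     (\<forall>g. limsup (\<lambda>T. ereal (avg_gap M (ah g) W (xh g) T)) \<le> 0 \<and>
          limsup (\<lambda>T. ereal (avg_gap M (ac g) W (xc g) T)) \<le> 0)"

text \<open>Feasible policies of the offline problem P1: decisions may depend on the whole
  (future) realisation, i.e. they are arbitrary measurable functions on the sample space.\<close>
definition offline_feasible ::
  "'w measure \<Rightarrow> (nat \<Rightarrow> 'w \<Rightarrow> 's) \<Rightarrow> ('g \<Rightarrow> real) \<Rightarrow> ('g \<Rightarrow> 's \<Rightarrow> real) \<Rightarrow> ('g \<Rightarrow> 's \<Rightarrow> real) \<Rightarrow>
   ('g \<Rightarrow> nat \<Rightarrow> 'w \<Rightarrow> real) \<Rightarrow> ('g \<Rightarrow> nat \<Rightarrow> 'w \<Rightarrow> real) \<Rightarrow> bool" where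
  "offline_feasible M W xm ah ac xh xc \<longleftrightarrow>
     (\<forall>g t. xh g t \<in> borel_measurable M \<and> xc g t \<in> borel_measurable M) \<and>
     (\<forall>t\<ge>1. \<forall>\<omega>\<in>space M. feasible_action xm (\<lambda>g. xh g t \<omega>) (\<lambda>g. xc g t \<omega>)) \<and>
     avg_constraints M W ah ac xh xc"

definition F_off ::
  "'w measure \<Rightarrow> ('s \<Rightarrow> real) \<Rightarrow> (nat \<Rightarrow> 'w \<Rightarrow> 's) \<Rightarrow> ('g::finite \<Rightarrow> real) \<Rightarrow>
   ('g \<Rightarrow> 's \<Rightarrow> real) \<Rightarrow> ('g \<Rightarrow> 's \<Rightarrow> real) \<Rightarrow> ereal" where
  "F_off M pr W xm ah ac =
     (SUP p \<in> {(xh, xc). offline_feasible M W xm ah ac xh xc}. flex_value M pr W (fst p) (snd p))"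

definition history :: "'w measure \<Rightarrow> 's measure \<Rightarrow> (nat \<Rightarrow> 'w \<Rightarrow> 's) \<Rightarrow> nat \<Rightarrow> 'w measure" where
  "history M S W t = sigma (space M) (\<Union>i\<in>{1..t}. {W i -` A \<inter> space M | A. A \<in> sets S})"

definition online_obj :: "real \<Rightarrow> real \<Rightarrow> ('g::finite \<Rightarrow> real) \<Rightarrow> ('g \<Rightarrow> real) \<Rightarrow>
    ('g \<Rightarrow> real) \<Rightarrow> ('g \<Rightarrow> real) \<Rightarrow> real" where
  "online_obj V p Qh Qc yh yc = (\<Sum>g\<in>UNIV. (- V * p - Qh g) * yh g + (V * p - Qc g) * yc g)"

text \<open>(xh, xc) is produced by the online algorithm: causal, and at each slot t it is an
  optimal solution of P1' given the current queues (generated by the algorithm itself).\<close>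
definition online_policy ::
  "'w measure \<Rightarrow> 's measure \<Rightarrow> (nat \<Rightarrow> 'w \<Rightarrow> 's) \<Rightarrow> real \<Rightarrow> ('s \<Rightarrow> real) \<Rightarrow> ('g::finite \<Rightarrow> real) \<Rightarrow>
   ('g \<Rightarrow> 's \<Rightarrow> real) \<Rightarrow> ('g \<Rightarrow> 's \<Rightarrow> real) \<Rightarrow>
   ('g \<Rightarrow> nat \<Rightarrow> 'w \<Rightarrow> real) \<Rightarrow> ('g \<Rightarrow> nat \<Rightarrow> 'w \<Rightarrow> real) \<Rightarrow> bool" where
  "online_policy M S W V pr xm ah ac xh xc \<longleftrightarrow>
     (\<forall>g t. xh g t \<in> borel_measurable (history M S W t) \<and>
            xc g t \<in> borel_measurable (history M S W t)) \<and>
     (\<forall>t\<ge>1. \<forall>\<omega>\<in>space M.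
        (let Qh = (\<lambda>g. queue (\<lambda>i. xh g i \<omega>) (\<lambda>i. ah g (W i \<omega>)) t);
             Qc = (\<lambda>g. queue (\<lambda>i. xc g i \<omega>) (\<lambda>i. ac g (W i \<omega>)) t)
         in feasible_action xm (\<lambda>g. xh g t \<omega>) (\<lambda>g. xc g t \<omega>) \<and>
            (\<forall>yh yc. feasible_action xm yh yc \<longrightarrow>
               online_obj V (pr (W t \<omega>)) Qh Qc (\<lambda>g. xh g t \<omega>) (\<lambda>g. xc g t \<omega>)
                 \<le> online_obj V (pr (W t \<omega>)) Qh Qc yh yc)))"

definition A1 :: "('g::finite \<Rightarrow> real) \<Rightarrow> ('g \<Rightarrow> real) \<Rightarrow> ('g \<Rightarrow> real) \<Rightarrow> ('g \<Rightarrow> real) \<Rightarrow> real" where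
  "A1 xhmax ahmax xcmax acmax =
     1/2 * (\<Sum>g\<in>UNIV. xhmax g ^ 2 + ahmax g ^ 2) + 1/2 * (\<Sum>g\<in>UNIV. xcmax g ^ 2 + acmax g ^ 2)"

end

(*
  The online policy maximises, in every slot, the Lagrangian of P1 with the scaled queues Q_t / V1
  as multipliers. Hence the Lyapunov function L = (1/2) sum Q^2 obeys the drift-plus-penalty bound
    L_{t+1} - L_t <= A1 + V1 F_t - V1 D_t(Q_t / V1),
  where D_t(lambda) is the maximum of the slot-t Lagrangian over the feasible actions. Q_t depends
  only on the states before slot t, which are independent of the current state, so E[D_t(Q_t / V1)]
  is at least the value of the dual problem; by weak duality this value bounds the flexibility
  value of every offline-feasible policy. Telescoping gives F* >= F^off - A1 / V1. The same
  telescoped bound with |F_t| <= Fmax gives E[L_{T+1}] = O(T), hence E[Q_{T+1}] = O(sqrt T): the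
  online policy meets the time-average constraints, so it is offline feasible and F* <= F^off.
*)

theory Submission
  imports Defs
begin

section \<open>Histories of the state process and independence\<close>

lemma space_history [simp]: "space (history M S W t) = space M"
  unfolding history_def by (rule space_measure_of) auto

lemma sets_history:
  "sets (history M S W t) = sigma_sets (space M) (\<Union>i\<in>{1..t}. {W i -` A \<inter> space M | A. A \<in> sets S})"
  unfolding history_def by (rule sets_measure_of) auto

lemma subalgebra_history:
  assumes "\<And>i. W i \<in> measurable M S"
  shows "subalgebra M (history M S W t)"
  unfolding subalgebra_def sets_history
  by (auto intro!: sets.sigma_sets_subset measurable_sets assms)

lemma subalgebra_history_mono:
  assumes "s \<le> t"
  shows "subalgebra (history M S W t) (history M S W s)"
  unfolding subalgebra_def sets_history using assms
  by (intro conjI sigma_sets_mono' UN_mono) auto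

lemma measurable_history_mono:
  "s \<le> t \<Longrightarrow> f \<in> borel_measurable (history M S W s) \<Longrightarrow> f \<in> borel_measurable (history M S W t)"
  using measurable_from_subalg[OF subalgebra_history_mono] by blast

lemma measurable_history_state:
  assumes "\<And>i. W i \<in> measurable M S" "1 \<le> i" "i \<le> t"
  shows "W i \<in> measurable (history M S W t) S"
proof (rule measurableI)
  fix \<omega> assume "\<omega> \<in> space (history M S W t)"
  then show "W i \<omega> \<in> space S"
    using measurable_space[OF assms(1)] by simp
next
  fix A assume "A \<in> sets S"
  then have "W i -` A \<inter> space M \<in> (\<Union>j\<in>{1..t}. {W j -` B \<inter> space M | B. B \<in> sets S})"
    using assms(2,3) by (intro UN_I[of i]) auto
  then show "W i -` A \<inter> space (history M S W t) \<in> sets (history M S W t)"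
    unfolding sets_history space_history by (rule sigma_sets.Basic)
qed

lemma (in prob_space) indep_set_history:
  assumes W: "\<And>i. W i \<in> measurable M S" and indep: "indep_vars (\<lambda>_. S) W {1..}" and "1 \<le> t"
  shows "indep_set (sets (history M S W (t - 1))) {W t -` A \<inter> space M | A. A \<in> sets S}"
proof -
  define E where "E i = {W i -` A \<inter> space M | A. A \<in> sets S}" for i
  define I where "I = case_bool {1..t - 1} {t}"
  have "indep_sets E {1..}"
    using indep unfolding indep_vars_def2 E_def by blast
  then have "indep_sets E (\<Union>b. I b)"
    by (rule indep_sets_mono_index[rotated]) (use \<open>1 \<le> t\<close> in \<open>auto simp: I_def split: bool.splits\<close>)
  then have "indep_sets (\<lambda>b. sigma_sets (space M) (\<Union>i\<in>I b. E i)) UNIV"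
  proof (rule indep_sets_collect_sigma)
    fix i
    show "Int_stable (E i)"
    proof (rule Int_stableI)
      fix a b assume "a \<in> E i" "b \<in> E i"
      then obtain A B where "A \<in> sets S" "B \<in> sets S" "a = W i -` A \<inter> space M" "b = W i -` B \<inter> space M"
        by (auto simp: E_def)
      then show "a \<inter> b \<in> E i"
        unfolding E_def by (intro CollectI exI[of _ "A \<inter> B"]) auto
    qed
  qed (auto simp: disjoint_family_on_def I_def split: bool.splits)
  then have "indep_sets (case_bool (sets (history M S W (t - 1))) (E t)) UNIV"
  proof (rule indep_sets_mono_sets)
    fix b :: bool
    have "E t \<subseteq> sigma_sets (space M) (E t)" by (rule sigma_sets_superset_generator)
    then show "case_bool (sets (history M S W (t - 1))) (E t) b \<subseteq> sigma_sets (space M) (\<Union>i\<in>I b. E i)"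
      by (cases b) (auto simp: I_def sets_history E_def)
  qed
  then show ?thesis
    unfolding indep_set_def E_def .
qed

lemma (in finite_measure) integrable_if_bounded:
  fixes f :: "'a \<Rightarrow> real"
  assumes "f \<in> borel_measurable M" and "\<And>\<omega>. \<omega> \<in> space M \<Longrightarrow> \<bar>f \<omega>\<bar> \<le> B"
  shows "integrable M f"
  using assms by (intro integrable_const_bound[where B = B] AE_I2) auto

lemma (in prob_space) distr_pair_eq_pair_distr_if_indep:
  assumes H: "subalgebra M H" and X: "X \<in> measurable M N"
    and indep: "indep_set (sets H) {X -` A \<inter> space M | A. A \<in> sets N}"
  shows "distr M (H \<Otimes>\<^sub>M N) (\<lambda>\<omega>. (\<omega>, X \<omega>)) = distr M H (\<lambda>\<omega>. \<omega>) \<Otimes>\<^sub>M distr M N X"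
proof -
  have sets_H: "sets H \<subseteq> sets M"
    using H by (simp add: subalgebra_def)
  have id: "(\<lambda>\<omega>. \<omega>) \<in> measurable M H"
    by (rule measurable_from_subalg[OF H measurable_ident_sets[OF refl]])
  have XY: "(\<lambda>\<omega>. (\<omega>, X \<omega>)) \<in> measurable M (H \<Otimes>\<^sub>M N)"
    using id X by (rule measurable_Pair)
  interpret PH: prob_space "distr M H (\<lambda>\<omega>. \<omega>)" by (rule prob_space_distr[OF id])
  interpret PN: prob_space "distr M N X" by (rule prob_space_distr[OF X])
  show ?thesis
  proof (rule sym, rule pair_measure_eqI)
    show "sigma_finite_measure (distr M H (\<lambda>\<omega>. \<omega>))" "sigma_finite_measure (distr M N X)"
      by unfold_locales
    show "sets (distr M H (\<lambda>\<omega>. \<omega>) \<Otimes>\<^sub>M distr M N X) = sets (distr M (H \<Otimes>\<^sub>M N) (\<lambda>\<omega>. (\<omega>, X \<omega>)))"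
      by (subst sets_distr, rule sets_pair_measure_cong) simp_all
  next
    fix A B assume A: "A \<in> sets (distr M H (\<lambda>\<omega>. \<omega>))" and B: "B \<in> sets (distr M N X)"
    have A_M: "A \<in> events" and A_space: "A \<subseteq> space M"
      using A sets_H sets.sets_into_space by auto
    have XB: "X -` B \<inter> space M \<in> events"
      using B X by (auto intro: measurable_sets)
    have "(\<lambda>\<omega>. (\<omega>, X \<omega>)) -` (A \<times> B) \<inter> space M = A \<inter> (X -` B \<inter> space M)"
      using A_space by auto
    moreover have "prob (A \<inter> (X -` B \<inter> space M)) = prob A * prob (X -` B \<inter> space M)"
      using A B by (intro indep_setD[OF indep]) auto
    moreover have "(\<lambda>\<omega>. \<omega>) -` A \<inter> space M = A"
      using A_space by auto
    ultimately show "emeasure (distr M H (\<lambda>\<omega>. \<omega>)) A * emeasure (distr M N X) B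
        = emeasure (distr M (H \<Otimes>\<^sub>M N) (\<lambda>\<omega>. (\<omega>, X \<omega>))) (A \<times> B)"
      using A B A_M XB by (simp add: emeasure_distr[OF id] emeasure_distr[OF X] emeasure_distr[OF XY]
          emeasure_eq_measure ennreal_mult)
  qed
qed

lemma (in prob_space) integral_ge_if_indep:
  fixes f :: "'a \<Rightarrow> 'b \<Rightarrow> real"
  assumes H: "subalgebra M H" and X: "X \<in> measurable M N"
    and indep: "indep_set (sets H) {X -` A \<inter> space M | A. A \<in> sets N}"
    and f: "(\<lambda>(\<omega>, s). f \<omega> s) \<in> borel_measurable (H \<Otimes>\<^sub>M N)"
    and bounded: "\<And>\<omega> s. \<omega> \<in> space M \<Longrightarrow> s \<in> space N \<Longrightarrow> \<bar>f \<omega> s\<bar> \<le> B"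
    and ge: "\<And>\<omega>. \<omega> \<in> space M \<Longrightarrow> c \<le> (\<integral>\<omega>'. f \<omega> (X \<omega>') \<partial>M)"
  shows "c \<le> (\<integral>\<omega>. f \<omega> (X \<omega>) \<partial>M)"
proof -
  have space_H: "space H = space M"
    using H by (simp add: subalgebra_def)
  have id: "(\<lambda>\<omega>. \<omega>) \<in> measurable M H"
    by (rule measurable_from_subalg[OF H measurable_ident_sets[OF refl]])
  have XY: "(\<lambda>\<omega>. (\<omega>, X \<omega>)) \<in> measurable M (H \<Otimes>\<^sub>M N)"
    using id X by (rule measurable_Pair)
  let ?PH = "distr M H (\<lambda>\<omega>. \<omega>)" and ?PN = "distr M N X"
  interpret PH: prob_space ?PH by (rule prob_space_distr[OF id])
  interpret PN: prob_space ?PN by (rule prob_space_distr[OF X])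
  interpret P: pair_prob_space ?PH ?PN ..
  have sets_eq: "sets (?PH \<Otimes>\<^sub>M ?PN) = sets (H \<Otimes>\<^sub>M N)"
    by (intro sets_pair_measure_cong sets_distr)
  have f': "(\<lambda>(\<omega>, s). f \<omega> s) \<in> borel_measurable (?PH \<Otimes>\<^sub>M ?PN)"
    using f unfolding measurable_cong_sets[OF sets_eq refl] .
  have int: "integrable (?PH \<Otimes>\<^sub>M ?PN) (\<lambda>(\<omega>, s). f \<omega> s)"
  proof (rule P.P.integrable_if_bounded[OF f'])
    fix p assume "p \<in> space (?PH \<Otimes>\<^sub>M ?PN)"
    then show "\<bar>(\<lambda>(\<omega>, s). f \<omega> s) p\<bar> \<le> B"
      using bounded by (cases p) (simp add: space_pair_measure space_H)
  qed
  have "(\<integral>\<omega>. f \<omega> (X \<omega>) \<partial>M) = (\<integral>p. (\<lambda>(\<omega>, s). f \<omega> s) p \<partial>distr M (H \<Otimes>\<^sub>M N) (\<lambda>\<omega>. (\<omega>, X \<omega>)))"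
    by (simp add: integral_distr[OF XY f])
  also have "\<dots> = (\<integral>\<omega>. (\<integral>s. f \<omega> s \<partial>?PN) \<partial>?PH)"
    unfolding distr_pair_eq_pair_distr_if_indep[OF H X indep] using P.integral_fst'[OF int] by simp
  also have "c \<le> \<dots>"
  proof (rule PH.integral_ge_const)
    show "integrable ?PH (\<lambda>\<omega>. \<integral>s. f \<omega> s \<partial>?PN)"
      using P.integrable_fst'[OF int] by simp
    have "(\<integral>s. f \<omega> s \<partial>?PN) = (\<integral>\<omega>'. f \<omega> (X \<omega>') \<partial>M)" if "\<omega> \<in> space M" for \<omega>
      using measurable_Pair2[OF f, of \<omega>] that space_H by (intro integral_distr X) auto
    then show "AE \<omega> in ?PH. c \<le> (\<integral>s. f \<omega> s \<partial>?PN)"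
      using ge space_H by (intro AE_I2) auto
  qed
  finally show ?thesis .
qed

lemma (in prob_space) integral_le_sqrt_if_square_le:
  fixes q L :: "'a \<Rightarrow> real" and T C :: real
  assumes "integrable M q" "integrable M L" and T: "0 < T"
    and square_le: "\<And>\<omega>. \<omega> \<in> space M \<Longrightarrow> (q \<omega>)\<^sup>2 \<le> 2 * L \<omega>"
    and integral_L: "(\<integral>\<omega>. L \<omega> \<partial>M) \<le> T * C"
  shows "(\<integral>\<omega>. q \<omega> \<partial>M) \<le> sqrt T * (C + 1 / 2)"
proof -
  have sqrt_T: "0 < sqrt T" "sqrt T * sqrt T = T" using T by auto
  have "q \<omega> \<le> L \<omega> / sqrt T + sqrt T / 2" if "\<omega> \<in> space M" for \<omega>
  proof -
    \<comment> \<open>AM-GM; the weight \<open>sqrt T\<close> balances the two terms of the resulting bound\<close>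
    have "2 * sqrt T * q \<omega> \<le> (q \<omega>)\<^sup>2 + T"
      using sum_squares_ge_zero[of "q \<omega> - sqrt T" 0] sqrt_T by (simp add: power2_eq_square algebra_simps)
    then show ?thesis using square_le[OF that] sqrt_T by (simp add: field_simps)
  qed
  then have "(\<integral>\<omega>. q \<omega> \<partial>M) \<le> (\<integral>\<omega>. L \<omega> / sqrt T + sqrt T / 2 \<partial>M)"
    using assms by (intro integral_mono) auto
  also have "\<dots> = (\<integral>\<omega>. L \<omega> \<partial>M) / sqrt T + sqrt T / 2"
    using assms by (simp add: prob_space)
  also have "\<dots> \<le> T / sqrt T * C + sqrt T / 2"
    using integral_L sqrt_T by (simp add: divide_right_mono)
  also have "\<dots> = sqrt T * (C + 1 / 2)"
    using T by (simp add: real_div_sqrt algebra_simps)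
  finally show ?thesis .
qed

lemma limsup_le_if_le_plus_nonpos:
  fixes x u :: "nat \<Rightarrow> real"
  assumes "eventually (\<lambda>T. x T \<le> c + u T) sequentially" and "limsup (\<lambda>T. ereal (u T)) \<le> 0"
  shows "limsup (\<lambda>T. ereal (x T)) \<le> ereal c"
proof -
  have "limsup (\<lambda>T. ereal (x T)) \<le> limsup (\<lambda>T. ereal c + ereal (u T))"
    using assms(1) by (intro Limsup_mono) (auto elim: eventually_mono)
  also have "\<dots> = ereal c + limsup (\<lambda>T. ereal (u T))"
    by (rule Limsup_add_ereal_left) simp_all
  also have "\<dots> \<le> ereal c"
    using assms(2) by (metis add.right_neutral add_left_mono)
  finally show ?thesis .
qed

lemma limsup_add_nonpos:
  fixes u v :: "nat \<Rightarrow> real"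
  assumes "limsup (\<lambda>T. ereal (u T)) \<le> 0" "limsup (\<lambda>T. ereal (v T)) \<le> 0"
  shows "limsup (\<lambda>T. ereal (u T + v T)) \<le> 0"
  using ereal_limsup_add_mono[of "\<lambda>T. ereal (u T)" "\<lambda>T. ereal (v T)"] add_mono[OF assms]
  by simp

lemma limsup_mult_nonpos:
  fixes u :: "nat \<Rightarrow> real"
  assumes "0 \<le> c" "limsup (\<lambda>T. ereal (u T)) \<le> 0"
  shows "limsup (\<lambda>T. ereal (c * u T)) \<le> 0"
  using limsup_ereal_mult_left[OF assms(1), of "\<lambda>T. ereal (u T)"] assms
  by (simp add: ereal_mult_le_0_iff)

lemma limsup_sum_nonpos:
  fixes u :: "'i \<Rightarrow> nat \<Rightarrow> real"
  assumes "finite I" "\<And>i. i \<in> I \<Longrightarrow> limsup (\<lambda>T. ereal (u i T)) \<le> 0"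
  shows "limsup (\<lambda>T. ereal (\<Sum>i\<in>I. u i T)) \<le> 0"
  using assms by (induction I rule: finite_induct) (auto simp: Limsup_const intro!: limsup_add_nonpos)

lemma limsup_nonpos_if_le_div_sqrt:
  fixes x :: "nat \<Rightarrow> real"
  assumes "eventually (\<lambda>T. x T \<le> C / sqrt T) sequentially"
  shows "limsup (\<lambda>T. ereal (x T)) \<le> 0"
proof -
  have "filterlim (\<lambda>T. sqrt (real T)) at_infinity sequentially"
    by (intro filterlim_at_top_imp_at_infinity filterlim_compose[OF sqrt_at_top filterlim_real_sequentially])
  then have "(\<lambda>T. C / sqrt (real T)) \<longlonglongrightarrow> 0"
    by (intro tendsto_divide_0[OF tendsto_const])
  then have lim: "limsup (\<lambda>T. ereal (C / sqrt T)) = 0"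
    unfolding zero_ereal_def by (rule lim_imp_Limsup[OF sequentially_bot tendsto_ereal])
  have "eventually (\<lambda>T. x T \<le> 0 + C / sqrt T) sequentially"
    using assms by simp
  then have "limsup (\<lambda>T. ereal (x T)) \<le> ereal 0"
    by (rule limsup_le_if_le_plus_nonpos) (simp add: lim)
  then show ?thesis
    by (simp only: zero_ereal_def[symmetric])
qed

lemma queue_nonneg:
  assumes "\<And>i. 0 \<le> a i"
  shows "0 \<le> queue x a t"
  by (induction t) (use assms in \<open>auto simp: add_nonneg_nonneg\<close>)

lemma queue_le:
  assumes "\<And>i. 1 \<le> i \<Longrightarrow> 0 \<le> x i" and "\<And>i. 0 \<le> a i" and "\<And>i. a i \<le> amax"
  shows "queue x a t \<le> real t * amax"
proof (induction t)
  case (Suc t)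
  have "0 \<le> amax" using assms(2,3) order_trans by blast
  moreover have "queue x a (Suc t) \<le> queue x a t + amax" if "1 \<le> t"
  proof -
    have "0 \<le> queue x a t" by (rule queue_nonneg) (rule assms(2))
    then show ?thesis using assms(1)[OF that] assms(3)[of t] that by (auto simp: max_def)
  qed
  ultimately show ?case using Suc.IH by (cases "t = 0") (auto simp: algebra_simps)
qed simp

lemma sum_diff_le_queue: "(\<Sum>t=1..T. a t - x t) \<le> queue x a (Suc T)"
  by (induction T) (auto simp: max_def)

lemma (in prob_space) sum_integral_le_integral_queue:
  assumes "\<And>t. integrable M (a t)" and "\<And>t. 1 \<le> t \<Longrightarrow> integrable M (x t)"
    and "integrable M (\<lambda>\<omega>. queue (\<lambda>i. x i \<omega>) (\<lambda>i. a i \<omega>) (Suc T))"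
  shows "(\<Sum>t=1..T. \<integral>\<omega>. a t \<omega> - x t \<omega> \<partial>M) \<le> (\<integral>\<omega>. queue (\<lambda>i. x i \<omega>) (\<lambda>i. a i \<omega>) (Suc T) \<partial>M)"
proof -
  have "(\<Sum>t=1..T. \<integral>\<omega>. a t \<omega> - x t \<omega> \<partial>M) = (\<integral>\<omega>. (\<Sum>t=1..T. a t \<omega> - x t \<omega>) \<partial>M)"
    using assms by (subst Bochner_Integration.integral_sum) auto
  also have "\<dots> \<le> (\<integral>\<omega>. queue (\<lambda>i. x i \<omega>) (\<lambda>i. a i \<omega>) (Suc T) \<partial>M)"
    using assms by (intro integral_mono sum_diff_le_queue) auto
  finally show ?thesis .
qed

lemma (in prob_space) avg_gap_le_if_queue_square_le:
  assumes "\<And>t. integrable M (a t)" and "\<And>t. 1 \<le> t \<Longrightarrow> integrable M (x t)"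
    and "integrable M (\<lambda>\<omega>. queue (\<lambda>i. x i \<omega>) (\<lambda>i. a i \<omega>) (Suc T))" and "integrable M L"
    and T: "1 \<le> T"
    and "\<And>\<omega>. \<omega> \<in> space M \<Longrightarrow> (queue (\<lambda>i. x i \<omega>) (\<lambda>i. a i \<omega>) (Suc T))\<^sup>2 \<le> 2 * L \<omega>"
    and "(\<integral>\<omega>. L \<omega> \<partial>M) \<le> real T * C"
  shows "(\<Sum>t=1..T. \<integral>\<omega>. a t \<omega> - x t \<omega> \<partial>M) / real T \<le> (C + 1 / 2) / sqrt T"
proof -
  have "(\<Sum>t=1..T. \<integral>\<omega>. a t \<omega> - x t \<omega> \<partial>M) \<le> (\<integral>\<omega>. queue (\<lambda>i. x i \<omega>) (\<lambda>i. a i \<omega>) (Suc T) \<partial>M)"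
    using assms by (intro sum_integral_le_integral_queue)
  also have "\<dots> \<le> sqrt T * (C + 1 / 2)"
    using assms by (intro integral_le_sqrt_if_square_le[where L = L]) auto
  finally have "(\<Sum>t=1..T. \<integral>\<omega>. a t \<omega> - x t \<omega> \<partial>M) / real T \<le> sqrt T * (C + 1 / 2) / real T"
    using T by (intro divide_right_mono) auto
  also have "\<dots> = sqrt T * (C + 1 / 2) / (sqrt T * sqrt T)"
    by simp
  also have "\<dots> = (C + 1 / 2) / sqrt T"
    using T by (intro mult_divide_mult_cancel_left) simp
  finally show ?thesis .
qed

section \<open>The Lagrangian of one slot and the Lyapunov drift\<close>

lemma linear_le_max_vertices:
  fixes u v yh yc m :: real
  assumes "0 \<le> yc" "yc \<le> yh" "yh \<le> m"
  shows "u * (yh - yc) + v * yc \<le> max 0 (max (u * m) (v * m))"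
proof -
  define w where "w = max 0 (max u v)"
  have "u * (yh - yc) + v * yc \<le> w * (yh - yc) + w * yc"
    using assms by (intro add_mono mult_right_mono) (auto simp: w_def)
  also have "\<dots> = w * yh"
    by (simp add: algebra_simps)
  also have "\<dots> \<le> w * m"
    using assms by (intro mult_left_mono) (auto simp: w_def)
  also have "\<dots> = max 0 (max (u * m) (v * m))"
    using assms by (simp add: w_def max_mult_distrib_right)
  finally show ?thesis .
qed

definition lagrangian ::
  "real \<Rightarrow> ('g::finite \<Rightarrow> real) \<Rightarrow> ('g \<Rightarrow> real) \<Rightarrow> ('g \<Rightarrow> real) \<Rightarrow> ('g \<Rightarrow> real) \<Rightarrow>
   ('g \<Rightarrow> real) \<Rightarrow> ('g \<Rightarrow> real) \<Rightarrow> real" where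
  "lagrangian p ahs acs lh lc yh yc =
     flex p yh yc + (\<Sum>g\<in>UNIV. lh g * (yh g - ahs g) + lc g * (yc g - acs g))"

text \<open>The maximum of the Lagrangian over the feasible actions: per group it is attained at one
  of the vertices \<open>(0, 0)\<close>, \<open>(m, 0)\<close>, \<open>(m, m)\<close> of the triangle \<open>0 \<le> yc \<le> yh \<le> m\<close>.\<close>
definition slot_dual ::
  "('g::finite \<Rightarrow> real) \<Rightarrow> real \<Rightarrow> ('g \<Rightarrow> real) \<Rightarrow> ('g \<Rightarrow> real) \<Rightarrow> ('g \<Rightarrow> real) \<Rightarrow>
   ('g \<Rightarrow> real) \<Rightarrow> real" where
  "slot_dual m p ahs acs lh lc =
     (\<Sum>g\<in>UNIV. max 0 (max ((p + lh g) * m g) ((lh g + lc g) * m g)) - lh g * ahs g - lc g * acs g)"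

lemma lagrangian_eq_sum:
  "lagrangian p ahs acs lh lc yh yc =
     (\<Sum>g\<in>UNIV. (p + lh g) * (yh g - yc g) + (lh g + lc g) * yc g - lh g * ahs g - lc g * acs g)"
  unfolding lagrangian_def flex_def
  by (simp add: sum_distrib_left sum_subtractf[symmetric] sum.distrib[symmetric] algebra_simps)

lemma lagrangian_le_slot_dual:
  assumes "feasible_action m yh yc"
  shows "lagrangian p ahs acs lh lc yh yc \<le> slot_dual m p ahs acs lh lc"
  unfolding lagrangian_eq_sum slot_dual_def using assms
  by (intro sum_mono diff_right_mono linear_le_max_vertices) (auto simp: feasible_action_def)

lemma slot_dual_attained:
  assumes "\<And>g. 0 \<le> m g"
  shows "\<exists>yh yc. feasible_action m yh yc \<and> lagrangian p ahs acs lh lc yh yc = slot_dual m p ahs acs lh lc"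
proof -
  define u where "u g = (p + lh g) * m g" for g
  define v where "v g = (lh g + lc g) * m g" for g
  define yh where "yh g = (if u g \<le> 0 \<and> v g \<le> 0 then 0 else m g)" for g
  define yc where "yc g = (if u g \<le> 0 \<and> v g \<le> 0 \<or> v g < u g then 0 else m g)" for g
  have "feasible_action m yh yc"
    using assms by (auto simp: feasible_action_def yh_def yc_def)
  moreover have "lagrangian p ahs acs lh lc yh yc = slot_dual m p ahs acs lh lc"
    unfolding lagrangian_eq_sum slot_dual_def
    by (intro sum.cong refl) (auto simp: yh_def yc_def u_def v_def max_def algebra_simps)
  ultimately show ?thesis by blast
qed

lemma online_obj_eq_lagrangian:
  assumes "V \<noteq> 0"
  shows "online_obj V p Qh Qc yh yc =
    - V * lagrangian p ahs acs (\<lambda>g. Qh g / V) (\<lambda>g. Qc g / V) yh yc - (\<Sum>g\<in>UNIV. Qh g * ahs g + Qc g * acs g)"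
  unfolding online_obj_def lagrangian_def flex_def using assms
  by (simp add: sum_distrib_left sum_subtractf[symmetric] sum.distrib[symmetric] sum_negf[symmetric] algebra_simps)

lemma online_optimum_attains_slot_dual:
  assumes "0 < V" and "\<And>g. 0 \<le> m g" and "feasible_action m xh xc"
    and opt: "\<And>yh yc. feasible_action m yh yc \<Longrightarrow> online_obj V p Qh Qc xh xc \<le> online_obj V p Qh Qc yh yc"
  shows "lagrangian p ahs acs (\<lambda>g. Qh g / V) (\<lambda>g. Qc g / V) xh xc
       = slot_dual m p ahs acs (\<lambda>g. Qh g / V) (\<lambda>g. Qc g / V)"
proof -
  obtain yh yc where y: "feasible_action m yh yc"
    and y_max: "lagrangian p ahs acs (\<lambda>g. Qh g / V) (\<lambda>g. Qc g / V) yh yc = slot_dual m p ahs acs (\<lambda>g. Qh g / V) (\<lambda>g. Qc g / V)"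
    using slot_dual_attained assms(2) by blast
  have "lagrangian p ahs acs (\<lambda>g. Qh g / V) (\<lambda>g. Qc g / V) yh yc \<le> lagrangian p ahs acs (\<lambda>g. Qh g / V) (\<lambda>g. Qc g / V) xh xc"
    using opt[OF y] \<open>0 < V\<close> by (simp add: online_obj_eq_lagrangian[where ahs = ahs and acs = acs])
  then show ?thesis
    using lagrangian_le_slot_dual[OF assms(3)] y_max by (simp add: order_antisym)
qed

lemma queue_step_square_le:
  fixes Q x a xm am :: real
  assumes "0 \<le> Q" "0 \<le> x" "x \<le> xm" "0 \<le> a" "a \<le> am"
  shows "(max (Q - x) 0 + a)\<^sup>2 \<le> Q\<^sup>2 + (xm\<^sup>2 + am\<^sup>2) + 2 * (Q * (a - x))"
proof -
  define u where "u = max (Q - x) 0"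
  have "u\<^sup>2 \<le> (Q - x)\<^sup>2" by (auto simp: u_def max_def power2_eq_square)
  moreover have "u * a \<le> Q * a" using assms by (intro mult_right_mono) (auto simp: u_def)
  moreover have "x\<^sup>2 \<le> xm\<^sup>2" "a\<^sup>2 \<le> am\<^sup>2" using assms by (auto intro: power_mono)
  moreover have "(u + a)\<^sup>2 = u\<^sup>2 + 2 * (u * a) + a\<^sup>2" "(Q - x)\<^sup>2 = Q\<^sup>2 - 2 * (Q * x) + x\<^sup>2"
    "Q * (a - x) = Q * a - Q * x"
    by (simp_all add: power2_eq_square algebra_simps)
  ultimately show ?thesis unfolding u_def by linarith
qed

definition lyapunov :: "('g::finite \<Rightarrow> real) \<Rightarrow> ('g \<Rightarrow> real) \<Rightarrow> real" where
  "lyapunov Qh Qc = (\<Sum>g\<in>UNIV. (Qh g)\<^sup>2 + (Qc g)\<^sup>2) / 2"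

lemma lyapunov_nonneg: "0 \<le> lyapunov Qh Qc"
  unfolding lyapunov_def by (intro divide_nonneg_pos sum_nonneg add_nonneg_nonneg) auto

lemma lyapunov_drift_le:
  assumes x: "feasible_action m xh xc" and Q: "\<And>g. 0 \<le> Qh g" "\<And>g. 0 \<le> Qc g"
    and a: "\<And>g. 0 \<le> ahs g \<and> ahs g \<le> ahmax g" "\<And>g. 0 \<le> acs g \<and> acs g \<le> acmax g"
    and m: "\<And>g. m g \<le> xhmax g" "\<And>g. m g \<le> xcmax g"
  shows "lyapunov (\<lambda>g. max (Qh g - xh g) 0 + ahs g) (\<lambda>g. max (Qc g - xc g) 0 + acs g) - lyapunov Qh Qc
    \<le> A1 xhmax ahmax xcmax acmax + (\<Sum>g\<in>UNIV. Qh g * (ahs g - xh g) + Qc g * (acs g - xc g))"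
proof -
  have step: "(max (Qh g - xh g) 0 + ahs g)\<^sup>2 + (max (Qc g - xc g) 0 + acs g)\<^sup>2
    \<le> ((Qh g)\<^sup>2 + (Qc g)\<^sup>2) + (((xhmax g)\<^sup>2 + (ahmax g)\<^sup>2) + ((xcmax g)\<^sup>2 + (acmax g)\<^sup>2))
      + 2 * (Qh g * (ahs g - xh g) + Qc g * (acs g - xc g))" for g
    using queue_step_square_le[of "Qh g" "xh g" "xhmax g" "ahs g" "ahmax g"]
      queue_step_square_le[of "Qc g" "xc g" "xcmax g" "acs g" "acmax g"]
      x Q a m unfolding feasible_action_def by (smt (verit))
  have A1: "2 * A1 xhmax ahmax xcmax acmax = (\<Sum>g\<in>UNIV. ((xhmax g)\<^sup>2 + (ahmax g)\<^sup>2) + ((xcmax g)\<^sup>2 + (acmax g)\<^sup>2))"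
    unfolding A1_def by (simp add: sum.distrib field_simps)
  have "(\<Sum>g\<in>UNIV. (max (Qh g - xh g) 0 + ahs g)\<^sup>2 + (max (Qc g - xc g) 0 + acs g)\<^sup>2)
    \<le> (\<Sum>g\<in>UNIV. ((Qh g)\<^sup>2 + (Qc g)\<^sup>2) + (((xhmax g)\<^sup>2 + (ahmax g)\<^sup>2) + ((xcmax g)\<^sup>2 + (acmax g)\<^sup>2))
      + 2 * (Qh g * (ahs g - xh g) + Qc g * (acs g - xc g)))"
    by (intro sum_mono step)
  also have "\<dots> = (\<Sum>g\<in>UNIV. (Qh g)\<^sup>2 + (Qc g)\<^sup>2) + 2 * A1 xhmax ahmax xcmax acmax
      + 2 * (\<Sum>g\<in>UNIV. Qh g * (ahs g - xh g) + Qc g * (acs g - xc g))"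
    unfolding A1 by (simp add: sum.distrib sum_distrib_left)
  finally show ?thesis
    unfolding lyapunov_def by linarith
qed

lemma drift_plus_penalty_le:
  assumes "0 < V" and m_nonneg: "\<And>g. 0 \<le> m g" and x: "feasible_action m xh xc"
    and opt: "\<And>yh yc. feasible_action m yh yc \<Longrightarrow> online_obj V p Qh Qc xh xc \<le> online_obj V p Qh Qc yh yc"
    and "\<And>g. 0 \<le> Qh g" "\<And>g. 0 \<le> Qc g"
    and "\<And>g. 0 \<le> ahs g \<and> ahs g \<le> ahmax g" "\<And>g. 0 \<le> acs g \<and> acs g \<le> acmax g"
    and "\<And>g. m g \<le> xhmax g" "\<And>g. m g \<le> xcmax g"
  shows "lyapunov (\<lambda>g. max (Qh g - xh g) 0 + ahs g) (\<lambda>g. max (Qc g - xc g) 0 + acs g) - lyapunov Qh Qc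
    \<le> A1 xhmax ahmax xcmax acmax + V * flex p xh xc - V * slot_dual m p ahs acs (\<lambda>g. Qh g / V) (\<lambda>g. Qc g / V)"
proof -
  have "V * (\<Sum>g\<in>UNIV. Qh g / V * (xh g - ahs g) + Qc g / V * (xc g - acs g))
      = (\<Sum>g\<in>UNIV. Qh g * (xh g - ahs g) + Qc g * (xc g - acs g))"
    unfolding sum_distrib_left using \<open>0 < V\<close> by (intro sum.cong refl) (simp add: field_simps)
  also have "\<dots> = - (\<Sum>g\<in>UNIV. Qh g * (ahs g - xh g) + Qc g * (acs g - xc g))"
    unfolding sum_negf[symmetric] by (intro sum.cong refl) (simp add: algebra_simps)
  finally have "(\<Sum>g\<in>UNIV. Qh g * (ahs g - xh g) + Qc g * (acs g - xc g))
      = V * flex p xh xc - V * lagrangian p ahs acs (\<lambda>g. Qh g / V) (\<lambda>g. Qc g / V) xh xc"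
    unfolding lagrangian_def by (simp add: distrib_left)
  moreover have "lyapunov (\<lambda>g. max (Qh g - xh g) 0 + ahs g) (\<lambda>g. max (Qc g - xc g) 0 + acs g) - lyapunov Qh Qc
    \<le> A1 xhmax ahmax xcmax acmax + (\<Sum>g\<in>UNIV. Qh g * (ahs g - xh g) + Qc g * (acs g - xc g))"
    by (rule lyapunov_drift_le) (use assms in auto)
  ultimately show ?thesis
    using online_optimum_attains_slot_dual[OF \<open>0 < V\<close> m_nonneg x opt] by simp
qed

lemma abs_flex_le:
  assumes "feasible_action m yh yc" and "\<bar>p\<bar> \<le> P"
  shows "\<bar>flex p yh yc\<bar> \<le> P * (\<Sum>g\<in>UNIV. m g)"
proof -
  have y: "0 \<le> yh g - yc g" "yh g - yc g \<le> m g" for g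
    using assms(1) unfolding feasible_action_def by (smt (verit))+
  have "\<bar>flex p yh yc\<bar> = \<bar>p\<bar> * (\<Sum>g\<in>UNIV. yh g - yc g)"
    unfolding flex_def sum_subtractf[symmetric] abs_mult using y by (simp add: sum_nonneg)
  also have "\<dots> \<le> P * (\<Sum>g\<in>UNIV. m g)"
    using assms(2) y by (intro mult_mono sum_mono sum_nonneg) auto
  finally show ?thesis .
qed

lemma abs_slot_dual_le:
  assumes m: "\<And>g. 0 \<le> m g" and p: "\<bar>p\<bar> \<le> P"
    and lh: "\<And>g. 0 \<le> lh g \<and> lh g \<le> Lh g" and lc: "\<And>g. 0 \<le> lc g \<and> lc g \<le> Lc g"
    and ahs: "\<And>g. \<bar>ahs g\<bar> \<le> Ah g" and acs: "\<And>g. \<bar>acs g\<bar> \<le> Ac g"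
  shows "\<bar>slot_dual m p ahs acs lh lc\<bar> \<le> (\<Sum>g\<in>UNIV. (P + Lh g + Lc g) * m g + Lh g * Ah g + Lc g * Ac g)"
  unfolding slot_dual_def
proof (rule order_trans[OF sum_abs], rule sum_mono)
  fix g
  have "(p + lh g) * m g \<le> (P + Lh g + Lc g) * m g" "(lh g + lc g) * m g \<le> (P + Lh g + Lc g) * m g"
    using m[of g] p lh[of g] lc[of g] by (intro mult_right_mono; linarith)+
  moreover have "0 \<le> (P + Lh g + Lc g) * m g"
    using m[of g] p lh[of g] lc[of g] by (intro mult_nonneg_nonneg) auto
  moreover have "\<bar>lh g * ahs g\<bar> \<le> Lh g * Ah g" "\<bar>lc g * acs g\<bar> \<le> Lc g * Ac g"
    unfolding abs_mult using lh[of g] lc[of g] ahs[of g] acs[of g] by (intro mult_mono; simp)+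
  ultimately show "\<bar>max 0 (max ((p + lh g) * m g) ((lh g + lc g) * m g)) - lh g * ahs g - lc g * acs g\<bar>
      \<le> (P + Lh g + Lc g) * m g + Lh g * Ah g + Lc g * Ac g"
    by (auto simp: abs_le_iff)
qed

section \<open>Offline policies and weak duality\<close>

locale flex_model = prob_space M for M :: "'w measure" +
  fixes S :: "'s measure" and W :: "nat \<Rightarrow> 'w \<Rightarrow> 's"
    and pr :: "'s \<Rightarrow> real" and pmax :: real and m :: "'g::finite \<Rightarrow> real"
    and ah ac :: "'g \<Rightarrow> 's \<Rightarrow> real" and ahmax acmax :: "'g \<Rightarrow> real"
  assumes W_measurable: "\<And>t. W t \<in> measurable M S"
    and W_indep: "indep_vars (\<lambda>_. S) W {1..}"
    and W_identically_distributed: "\<And>t. 1 \<le> t \<Longrightarrow> distr M S (W t) = distr M S (W 1)"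
    and pr_measurable: "pr \<in> borel_measurable S"
    and abs_pr_le: "\<And>s. s \<in> space S \<Longrightarrow> \<bar>pr s\<bar> \<le> pmax"
    and ah_measurable: "\<And>g. ah g \<in> borel_measurable S"
    and ac_measurable: "\<And>g. ac g \<in> borel_measurable S"
    and ah_bounds: "\<And>g s. s \<in> space S \<Longrightarrow> 0 \<le> ah g s \<and> ah g s \<le> ahmax g"
    and ac_bounds: "\<And>g s. s \<in> space S \<Longrightarrow> 0 \<le> ac g s \<and> ac g s \<le> acmax g"
    and m_nonneg: "\<And>g. 0 \<le> m g"
begin

lemmas [measurable] = W_measurable pr_measurable ah_measurable ac_measurable

lemma W_in_space: "\<omega> \<in> space M \<Longrightarrow> W t \<omega> \<in> space S"
  using measurable_space[OF W_measurable] .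

lemma measurable_M_if_history:
  "f \<in> borel_measurable (history M S W t) \<Longrightarrow> f \<in> borel_measurable M"
  by (rule measurable_from_subalg[OF subalgebra_history]) (rule W_measurable)

definition Fmax :: real where
  "Fmax = pmax * (\<Sum>g\<in>UNIV. m g)"

lemma abs_flex_W_le:
  "feasible_action m yh yc \<Longrightarrow> \<omega> \<in> space M \<Longrightarrow> \<bar>flex (pr (W t \<omega>)) yh yc\<bar> \<le> Fmax"
  unfolding Fmax_def by (intro abs_flex_le abs_pr_le W_in_space)

lemma integrable_arrivals:
  "integrable M (\<lambda>\<omega>. ah g (W t \<omega>))" "integrable M (\<lambda>\<omega>. ac g (W t \<omega>))"
proof -
  show "integrable M (\<lambda>\<omega>. ah g (W t \<omega>))"
    using ah_bounds[OF W_in_space] by (intro integrable_if_bounded[where B = "ahmax g"]) auto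
  show "integrable M (\<lambda>\<omega>. ac g (W t \<omega>))"
    using ac_bounds[OF W_in_space] by (intro integrable_if_bounded[where B = "acmax g"]) auto
qed

lemma abs_slot_dual_state_le:
  assumes "s \<in> space S" "\<And>g. 0 \<le> lh g \<and> lh g \<le> Lh g" "\<And>g. 0 \<le> lc g \<and> lc g \<le> Lc g"
  shows "\<bar>slot_dual m (pr s) (\<lambda>g. ah g s) (\<lambda>g. ac g s) lh lc\<bar>
    \<le> (\<Sum>g\<in>UNIV. (pmax + Lh g + Lc g) * m g + Lh g * ahmax g + Lc g * acmax g)"
  using assms ah_bounds[OF assms(1)] ac_bounds[OF assms(1)]
  by (intro abs_slot_dual_le m_nonneg abs_pr_le) auto

text \<open>The dual function of P1. Slot 1 is no restriction, since the states are identically distributed.\<close>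
definition dual :: "('g \<Rightarrow> real) \<Rightarrow> ('g \<Rightarrow> real) \<Rightarrow> real" where
  "dual lh lc = (\<integral>\<omega>. slot_dual m (pr (W 1 \<omega>)) (\<lambda>g. ah g (W 1 \<omega>)) (\<lambda>g. ac g (W 1 \<omega>)) lh lc \<partial>M)"

lemma integral_slot_dual_eq_dual:
  assumes "1 \<le> t"
  shows "(\<integral>\<omega>. slot_dual m (pr (W t \<omega>)) (\<lambda>g. ah g (W t \<omega>)) (\<lambda>g. ac g (W t \<omega>)) lh lc \<partial>M) = dual lh lc"
proof -
  define f where "f s = slot_dual m (pr s) (\<lambda>g. ah g s) (\<lambda>g. ac g s) lh lc" for s
  have f: "f \<in> borel_measurable S"
    unfolding f_def[abs_def] slot_dual_def by measurable
  have "(\<integral>\<omega>. f (W t \<omega>) \<partial>M) = integral\<^sup>L (distr M S (W t)) f"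
    by (rule integral_distr[symmetric, OF W_measurable f])
  also have "\<dots> = (\<integral>\<omega>. f (W 1 \<omega>) \<partial>M)"
    using W_identically_distributed[OF assms] by (simp add: integral_distr[OF W_measurable f])
  finally show ?thesis unfolding f_def dual_def .
qed

definition dual_lower_bound :: "real \<Rightarrow> bool" where
  "dual_lower_bound c \<longleftrightarrow> (\<forall>lh lc. (\<forall>g. 0 \<le> lh g \<and> 0 \<le> lc g) \<longrightarrow> c \<le> dual lh lc)"

context
  fixes yh yc :: "'g \<Rightarrow> nat \<Rightarrow> 'w \<Rightarrow> real"
  assumes offline: "offline_feasible M W m ah ac yh yc"
begin

lemma offline_measurable [measurable]: "yh g t \<in> borel_measurable M" "yc g t \<in> borel_measurable M"
  using offline unfolding offline_feasible_def by auto

lemma offline_feasible_action: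
  "1 \<le> t \<Longrightarrow> \<omega> \<in> space M \<Longrightarrow> feasible_action m (\<lambda>g. yh g t \<omega>) (\<lambda>g. yc g t \<omega>)"
  using offline unfolding offline_feasible_def by auto

lemma integrable_offline:
  assumes "1 \<le> t"
  shows "integrable M (yh g t)" "integrable M (yc g t)"
  using offline_feasible_action[OF assms]
  by (auto simp: feasible_action_def intro!: integrable_if_bounded[where B = "m g"])

lemma integrable_offline_flex:
  assumes "1 \<le> t"
  shows "integrable M (\<lambda>\<omega>. flex (pr (W t \<omega>)) (\<lambda>g. yh g t \<omega>) (\<lambda>g. yc g t \<omega>))"
proof (rule integrable_if_bounded)
  show "(\<lambda>\<omega>. flex (pr (W t \<omega>)) (\<lambda>g. yh g t \<omega>) (\<lambda>g. yc g t \<omega>)) \<in> borel_measurable M"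
    unfolding flex_def by measurable
  fix \<omega> assume "\<omega> \<in> space M"
  then show "\<bar>flex (pr (W t \<omega>)) (\<lambda>g. yh g t \<omega>) (\<lambda>g. yc g t \<omega>)\<bar> \<le> Fmax"
    by (intro abs_flex_W_le offline_feasible_action assms)
qed

lemma flex_value_ge: "ereal (- Fmax) \<le> flex_value M pr W yh yc"
  unfolding flex_value_def
proof (rule Liminf_bounded)
  have "- Fmax \<le> (\<integral>\<omega>. flex (pr (W t \<omega>)) (\<lambda>g. yh g t \<omega>) (\<lambda>g. yc g t \<omega>) \<partial>M)" if t: "1 \<le> t" for t
  proof (rule integral_ge_const)
    have "- Fmax \<le> flex (pr (W t \<omega>)) (\<lambda>g. yh g t \<omega>) (\<lambda>g. yc g t \<omega>)" if "\<omega> \<in> space M" for \<omega>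
      using abs_flex_W_le[OF offline_feasible_action[OF t that] that, where t = t] by (auto simp: abs_le_iff)
    then show "AE \<omega> in M. - Fmax \<le> flex (pr (W t \<omega>)) (\<lambda>g. yh g t \<omega>) (\<lambda>g. yc g t \<omega>)"
      by (rule AE_I2)
  qed (rule integrable_offline_flex[OF t])
  then have sum_ge: "real T * - Fmax \<le> (\<Sum>t=1..T. \<integral>\<omega>. flex (pr (W t \<omega>)) (\<lambda>g. yh g t \<omega>) (\<lambda>g. yc g t \<omega>) \<partial>M)" for T
    using sum_mono[of "{1..T}" "\<lambda>_. - Fmax"] by simp
  show "\<forall>\<^sub>F T in sequentially. ereal (- Fmax) \<le> ereal (avg_flex M pr W yh yc T)"
    using eventually_ge_at_top[of 1]
  proof eventually_elim
    case (elim T)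
    then show ?case using sum_ge[of T] by (simp add: avg_flex_def field_simps)
  qed
qed

lemma expected_flex_le_dual:
  assumes "1 \<le> t" and l: "\<And>g. 0 \<le> lh g" "\<And>g. 0 \<le> lc g"
  shows "(\<integral>\<omega>. flex (pr (W t \<omega>)) (\<lambda>g. yh g t \<omega>) (\<lambda>g. yc g t \<omega>) \<partial>M)
    \<le> dual lh lc + (\<Sum>g\<in>UNIV. lh g * (\<integral>\<omega>. ah g (W t \<omega>) - yh g t \<omega> \<partial>M) + lc g * (\<integral>\<omega>. ac g (W t \<omega>) - yc g t \<omega> \<partial>M))"
proof -
  define sd where "sd \<omega> = slot_dual m (pr (W t \<omega>)) (\<lambda>g. ah g (W t \<omega>)) (\<lambda>g. ac g (W t \<omega>)) lh lc" for \<omega>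
  define R where "R g \<omega> = lh g * (ah g (W t \<omega>) - yh g t \<omega>) + lc g * (ac g (W t \<omega>) - yc g t \<omega>)" for g \<omega>
  have int_R: "integrable M (R g)" for g
    unfolding R_def using integrable_arrivals integrable_offline[OF assms(1)] by auto
  have int_sd: "integrable M sd"
  proof (rule integrable_if_bounded)
    show "sd \<in> borel_measurable M"
      unfolding sd_def slot_dual_def by measurable
    fix \<omega> assume "\<omega> \<in> space M"
    then show "\<bar>sd \<omega>\<bar> \<le> (\<Sum>g\<in>UNIV. (pmax + lh g + lc g) * m g + lh g * ahmax g + lc g * acmax g)"
      unfolding sd_def using l by (intro abs_slot_dual_state_le W_in_space) auto
  qed
  have "flex (pr (W t \<omega>)) (\<lambda>g. yh g t \<omega>) (\<lambda>g. yc g t \<omega>) \<le> sd \<omega> + (\<Sum>g\<in>UNIV. R g \<omega>)"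
    if "\<omega> \<in> space M" for \<omega>
  proof -
    have "(\<Sum>g\<in>UNIV. lh g * (yh g t \<omega> - ah g (W t \<omega>)) + lc g * (yc g t \<omega> - ac g (W t \<omega>))) = - (\<Sum>g\<in>UNIV. R g \<omega>)"
      unfolding R_def sum_negf[symmetric] by (intro sum.cong refl) (simp add: algebra_simps)
    then show ?thesis
      using lagrangian_le_slot_dual[OF offline_feasible_action[OF assms(1) that], where p = "pr (W t \<omega>)"
          and ahs = "\<lambda>g. ah g (W t \<omega>)" and acs = "\<lambda>g. ac g (W t \<omega>)" and lh = lh and lc = lc]
      unfolding lagrangian_def sd_def by simp
  qed
  then have "(\<integral>\<omega>. flex (pr (W t \<omega>)) (\<lambda>g. yh g t \<omega>) (\<lambda>g. yc g t \<omega>) \<partial>M) \<le> (\<integral>\<omega>. sd \<omega> + (\<Sum>g\<in>UNIV. R g \<omega>) \<partial>M)"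
    using int_sd int_R integrable_offline_flex[OF assms(1)] by (intro integral_mono) auto
  also have "\<dots> = (\<integral>\<omega>. sd \<omega> \<partial>M) + (\<Sum>g\<in>UNIV. \<integral>\<omega>. R g \<omega> \<partial>M)"
    using int_sd int_R by (subst Bochner_Integration.integral_add) (auto simp: Bochner_Integration.integral_sum)
  also have "(\<integral>\<omega>. sd \<omega> \<partial>M) = dual lh lc"
    unfolding sd_def by (rule integral_slot_dual_eq_dual[OF assms(1)])
  also have "(\<Sum>g\<in>UNIV. \<integral>\<omega>. R g \<omega> \<partial>M)
      = (\<Sum>g\<in>UNIV. lh g * (\<integral>\<omega>. ah g (W t \<omega>) - yh g t \<omega> \<partial>M) + lc g * (\<integral>\<omega>. ac g (W t \<omega>) - yc g t \<omega> \<partial>M))"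
    unfolding R_def using integrable_arrivals integrable_offline[OF assms(1)] by simp
  finally show ?thesis .
qed

lemma avg_flex_le_dual:
  assumes T: "1 \<le> T" and l: "\<And>g. 0 \<le> lh g" "\<And>g. 0 \<le> lc g"
  shows "avg_flex M pr W yh yc T
    \<le> dual lh lc + (\<Sum>g\<in>UNIV. lh g * avg_gap M (ah g) W (yh g) T + lc g * avg_gap M (ac g) W (yc g) T)"
proof -
  define I1 where "I1 g t = (\<integral>\<omega>. ah g (W t \<omega>) - yh g t \<omega> \<partial>M)" for g t
  define I2 where "I2 g t = (\<integral>\<omega>. ac g (W t \<omega>) - yc g t \<omega> \<partial>M)" for g t
  have "(\<Sum>t=1..T. \<integral>\<omega>. flex (pr (W t \<omega>)) (\<lambda>g. yh g t \<omega>) (\<lambda>g. yc g t \<omega>) \<partial>M)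
    \<le> (\<Sum>t=1..T. dual lh lc + (\<Sum>g\<in>UNIV. lh g * I1 g t + lc g * I2 g t))"
    unfolding I1_def I2_def using expected_flex_le_dual[OF _ l] by (intro sum_mono) auto
  also have "\<dots> = real T * dual lh lc + (\<Sum>g\<in>UNIV. lh g * (\<Sum>t=1..T. I1 g t) + lc g * (\<Sum>t=1..T. I2 g t))"
    by (simp add: sum.distrib sum_distrib_left sum.swap[of _ "{Suc 0..T}" UNIV])
  also have "(\<Sum>g\<in>UNIV. lh g * (\<Sum>t=1..T. I1 g t) + lc g * (\<Sum>t=1..T. I2 g t))
    = real T * (\<Sum>g\<in>UNIV. lh g * avg_gap M (ah g) W (yh g) T + lc g * avg_gap M (ac g) W (yc g) T)"
    unfolding avg_gap_def I1_def[symmetric] I2_def[symmetric] sum_distrib_left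
    using T by (intro sum.cong refl) (simp add: field_simps sum_distrib_left)
  finally show ?thesis
    unfolding avg_flex_def using T by (simp add: pos_divide_le_eq algebra_simps)
qed

lemma flex_value_le_dual:
  assumes "\<And>g. 0 \<le> lh g" "\<And>g. 0 \<le> lc g"
  shows "flex_value M pr W yh yc \<le> ereal (dual lh lc)"
proof -
  have "limsup (\<lambda>T. ereal (\<Sum>g\<in>UNIV. lh g * avg_gap M (ah g) W (yh g) T + lc g * avg_gap M (ac g) W (yc g) T)) \<le> 0"
    using offline assms unfolding offline_feasible_def avg_constraints_def
    by (intro limsup_sum_nonpos limsup_add_nonpos limsup_mult_nonpos) auto
  moreover have "eventually (\<lambda>T. avg_flex M pr W yh yc T
      \<le> dual lh lc + (\<Sum>g\<in>UNIV. lh g * avg_gap M (ah g) W (yh g) T + lc g * avg_gap M (ac g) W (yc g) T)) sequentially"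
    using eventually_ge_at_top[of 1] by eventually_elim (rule avg_flex_le_dual[OF _ assms])
  ultimately have "limsup (\<lambda>T. ereal (avg_flex M pr W yh yc T)) \<le> ereal (dual lh lc)"
    by (intro limsup_le_if_le_plus_nonpos)
  then show ?thesis
    unfolding flex_value_def using Liminf_le_Limsup[of sequentially] order_trans by fastforce
qed

lemma dual_lower_bound_Fmax: "dual_lower_bound (- Fmax)"
  unfolding dual_lower_bound_def
proof (intro allI impI)
  fix lh lc :: "'g \<Rightarrow> real" assume "\<forall>g. 0 \<le> lh g \<and> 0 \<le> lc g"
  then have "ereal (- Fmax) \<le> ereal (dual lh lc)"
    by (intro order_trans[OF flex_value_ge flex_value_le_dual]) auto
  then show "- Fmax \<le> dual lh lc" by simp
qed

end

end

section \<open>The online policy\<close>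

locale online_flex_model = flex_model M S W pr pmax m ah ac ahmax acmax
    for M :: "'w measure" and S :: "'s measure" and W pr pmax and m :: "'g::finite \<Rightarrow> real"
    and ah ac ahmax acmax +
  fixes V :: real and xh xc :: "'g \<Rightarrow> nat \<Rightarrow> 'w \<Rightarrow> real" and xhmax xcmax :: "'g \<Rightarrow> real"
  assumes V_pos: "0 < V"
    and online: "online_policy M S W V pr m ah ac xh xc"
    and m_le_xhmax: "\<And>g. m g \<le> xhmax g" and m_le_xcmax: "\<And>g. m g \<le> xcmax g"
begin

definition Qh :: "'g \<Rightarrow> nat \<Rightarrow> 'w \<Rightarrow> real" where
  "Qh g t \<omega> = queue (\<lambda>i. xh g i \<omega>) (\<lambda>i. ah g (W i \<omega>)) t"

definition Qc :: "'g \<Rightarrow> nat \<Rightarrow> 'w \<Rightarrow> real" where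
  "Qc g t \<omega> = queue (\<lambda>i. xc g i \<omega>) (\<lambda>i. ac g (W i \<omega>)) t"

definition lyap :: "nat \<Rightarrow> 'w \<Rightarrow> real" where
  "lyap t \<omega> = lyapunov (\<lambda>g. Qh g t \<omega>) (\<lambda>g. Qc g t \<omega>)"

definition flex_online :: "nat \<Rightarrow> 'w \<Rightarrow> real" where
  "flex_online t \<omega> = flex (pr (W t \<omega>)) (\<lambda>g. xh g t \<omega>) (\<lambda>g. xc g t \<omega>)"

definition dual_online :: "nat \<Rightarrow> 'w \<Rightarrow> real" where
  "dual_online t \<omega> =
     slot_dual m (pr (W t \<omega>)) (\<lambda>g. ah g (W t \<omega>)) (\<lambda>g. ac g (W t \<omega>)) (\<lambda>g. Qh g t \<omega> / V) (\<lambda>g. Qc g t \<omega> / V)"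

lemma online_measurable_history:
  "xh g t \<in> borel_measurable (history M S W t)" "xc g t \<in> borel_measurable (history M S W t)"
  using online unfolding online_policy_def by auto

lemma online_measurable [measurable]: "xh g t \<in> borel_measurable M" "xc g t \<in> borel_measurable M"
  by (rule measurable_M_if_history[OF online_measurable_history(1)],
      rule measurable_M_if_history[OF online_measurable_history(2)])

lemma online_policy_slot:
  "\<forall>t\<ge>1. \<forall>\<omega>\<in>space M. feasible_action m (\<lambda>g. xh g t \<omega>) (\<lambda>g. xc g t \<omega>) \<and>
     (\<forall>yh yc. feasible_action m yh yc \<longrightarrow>
        online_obj V (pr (W t \<omega>)) (\<lambda>g. Qh g t \<omega>) (\<lambda>g. Qc g t \<omega>) (\<lambda>g. xh g t \<omega>) (\<lambda>g. xc g t \<omega>)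
          \<le> online_obj V (pr (W t \<omega>)) (\<lambda>g. Qh g t \<omega>) (\<lambda>g. Qc g t \<omega>) yh yc)"
  using online unfolding online_policy_def Let_def Qh_def[abs_def] Qc_def[abs_def] by (rule conjunct2)

lemma online_feasible_action:
  "1 \<le> t \<Longrightarrow> \<omega> \<in> space M \<Longrightarrow> feasible_action m (\<lambda>g. xh g t \<omega>) (\<lambda>g. xc g t \<omega>)"
  using online_policy_slot by simp

lemma online_optimal:
  "1 \<le> t \<Longrightarrow> \<omega> \<in> space M \<Longrightarrow> feasible_action m yh yc \<Longrightarrow>
    online_obj V (pr (W t \<omega>)) (\<lambda>g. Qh g t \<omega>) (\<lambda>g. Qc g t \<omega>) (\<lambda>g. xh g t \<omega>) (\<lambda>g. xc g t \<omega>)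
      \<le> online_obj V (pr (W t \<omega>)) (\<lambda>g. Qh g t \<omega>) (\<lambda>g. Qc g t \<omega>) yh yc"
  using online_policy_slot by simp

lemma Q_Suc:
  assumes "1 \<le> t"
  shows "Qh g (Suc t) \<omega> = max (Qh g t \<omega> - xh g t \<omega>) 0 + ah g (W t \<omega>)"
    and "Qc g (Suc t) \<omega> = max (Qc g t \<omega> - xc g t \<omega>) 0 + ac g (W t \<omega>)"
  using assms by (simp_all add: Qh_def Qc_def)

lemma Q_nonneg:
  assumes "\<omega> \<in> space M"
  shows "0 \<le> Qh g t \<omega> \<and> 0 \<le> Qc g t \<omega>"
  unfolding Qh_def Qc_def using ah_bounds[OF W_in_space[OF assms]] ac_bounds[OF W_in_space[OF assms]]
  by (intro conjI queue_nonneg) auto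

lemma Q_le:
  assumes "\<omega> \<in> space M"
  shows "Qh g t \<omega> \<le> real t * ahmax g \<and> Qc g t \<omega> \<le> real t * acmax g"
proof -
  have "0 \<le> xh g i \<omega> \<and> 0 \<le> xc g i \<omega>" if "1 \<le> i" for i
    using online_feasible_action[OF that assms] unfolding feasible_action_def by auto
  then show ?thesis
    unfolding Qh_def Qc_def using ah_bounds[OF W_in_space[OF assms]] ac_bounds[OF W_in_space[OF assms]]
    by (intro conjI queue_le) auto
qed

lemma Q_measurable_history:
  "Qh g (Suc t) \<in> borel_measurable (history M S W t) \<and> Qc g (Suc t) \<in> borel_measurable (history M S W t)"
proof (induction t)
  case 0
  then show ?case by (simp add: Qh_def[abs_def] Qc_def[abs_def])
next
  case (Suc t)
  have [measurable]: "W (Suc t) \<in> measurable (history M S W (Suc t)) S"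
    by (rule measurable_history_state[OF W_measurable]) auto
  have [measurable]: "Qh g (Suc t) \<in> borel_measurable (history M S W (Suc t))"
      "Qc g (Suc t) \<in> borel_measurable (history M S W (Suc t))"
    using Suc.IH by (auto intro: measurable_history_mono[of t])
  have [measurable]: "xh g (Suc t) \<in> borel_measurable (history M S W (Suc t))"
      "xc g (Suc t) \<in> borel_measurable (history M S W (Suc t))"
    by (rule online_measurable_history)+
  have "Qh g (Suc (Suc t)) = (\<lambda>\<omega>. max (Qh g (Suc t) \<omega> - xh g (Suc t) \<omega>) 0 + ah g (W (Suc t) \<omega>))"
      "Qc g (Suc (Suc t)) = (\<lambda>\<omega>. max (Qc g (Suc t) \<omega> - xc g (Suc t) \<omega>) 0 + ac g (W (Suc t) \<omega>))"
    by (simp_all add: fun_eq_iff Q_Suc)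
  then show ?case by simp
qed

lemma Q_measurable [measurable]: "Qh g t \<in> borel_measurable M" "Qc g t \<in> borel_measurable M"
proof -
  have "Qh g t \<in> borel_measurable M \<and> Qc g t \<in> borel_measurable M"
  proof (cases t)
    case 0
    then show ?thesis by (simp add: Qh_def[abs_def] Qc_def[abs_def])
  next
    case (Suc n)
    then show ?thesis
      using measurable_M_if_history[OF conjunct1[OF Q_measurable_history[of g n]]]
        measurable_M_if_history[OF conjunct2[OF Q_measurable_history[of g n]]] by simp
  qed
  then show "Qh g t \<in> borel_measurable M" "Qc g t \<in> borel_measurable M" by auto
qed

lemma multipliers_bounded:
  "\<omega> \<in> space M \<Longrightarrow> 0 \<le> Qh g t \<omega> / V \<and> Qh g t \<omega> / V \<le> real t * ahmax g / V"
  "\<omega> \<in> space M \<Longrightarrow> 0 \<le> Qc g t \<omega> / V \<and> Qc g t \<omega> / V \<le> real t * acmax g / V"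
  using Q_nonneg[of \<omega> g t] Q_le[of \<omega> g t] V_pos by (auto simp: divide_right_mono)

lemma integrable_online: "1 \<le> t \<Longrightarrow> integrable M (xh g t)" "1 \<le> t \<Longrightarrow> integrable M (xc g t)"
  using online_feasible_action by (auto simp: feasible_action_def intro!: integrable_if_bounded[where B = "m g"])

lemma integrable_Q: "integrable M (Qh g t)" "integrable M (Qc g t)"
proof -
  show "integrable M (Qh g t)"
    using Q_nonneg Q_le by (intro integrable_if_bounded[where B = "real t * ahmax g"]) auto
  show "integrable M (Qc g t)"
    using Q_nonneg Q_le by (intro integrable_if_bounded[where B = "real t * acmax g"]) auto
qed

lemma integrable_lyap: "integrable M (lyap t)"
proof (rule integrable_if_bounded)
  show "lyap t \<in> borel_measurable M"
    unfolding lyap_def[abs_def] lyapunov_def by measurable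
  fix \<omega> assume \<omega>: "\<omega> \<in> space M"
  have "lyap t \<omega> \<le> (\<Sum>g\<in>UNIV. (real t * ahmax g)\<^sup>2 + (real t * acmax g)\<^sup>2) / 2"
    unfolding lyap_def lyapunov_def using Q_nonneg[OF \<omega>] Q_le[OF \<omega>]
    by (intro divide_right_mono sum_mono add_mono power_mono) auto
  then show "\<bar>lyap t \<omega>\<bar> \<le> (\<Sum>g\<in>UNIV. (real t * ahmax g)\<^sup>2 + (real t * acmax g)\<^sup>2) / 2"
    by (simp add: lyap_def abs_of_nonneg[OF lyapunov_nonneg])
qed

lemma integrable_flex_online:
  assumes "1 \<le> t"
  shows "integrable M (flex_online t)"
proof (rule integrable_if_bounded)
  show "flex_online t \<in> borel_measurable M"
    unfolding flex_online_def[abs_def] flex_def by measurable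
  fix \<omega> assume "\<omega> \<in> space M"
  then show "\<bar>flex_online t \<omega>\<bar> \<le> Fmax"
    unfolding flex_online_def by (intro abs_flex_W_le online_feasible_action assms)
qed

lemma integrable_dual_online: "integrable M (dual_online t)"
proof (rule integrable_if_bounded)
  show "dual_online t \<in> borel_measurable M"
    unfolding dual_online_def[abs_def] slot_dual_def by measurable
  fix \<omega> assume "\<omega> \<in> space M"
  then show "\<bar>dual_online t \<omega>\<bar> \<le> (\<Sum>g\<in>UNIV. (pmax + real t * ahmax g / V + real t * acmax g / V) * m g
      + real t * ahmax g / V * ahmax g + real t * acmax g / V * acmax g)"
    unfolding dual_online_def by (intro abs_slot_dual_state_le W_in_space multipliers_bounded)
qed

lemma drift_plus_penalty:
  assumes "1 \<le> t" "\<omega> \<in> space M"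
  shows "lyap (Suc t) \<omega> - lyap t \<omega> \<le> A1 xhmax ahmax xcmax acmax + V * flex_online t \<omega> - V * dual_online t \<omega>"
  unfolding lyap_def flex_online_def dual_online_def Q_Suc[OF assms(1)]
  using assms Q_nonneg ah_bounds[OF W_in_space] ac_bounds[OF W_in_space] m_le_xhmax m_le_xcmax
  by (intro drift_plus_penalty_le V_pos m_nonneg online_feasible_action online_optimal) auto

text \<open>The multipliers \<open>Q t / V\<close> depend only on the states before slot \<open>t\<close>, which are independent
  of the current state \<open>W t\<close>, so in expectation they can be treated as constants.\<close>
lemma integral_dual_online_ge:
  assumes c: "dual_lower_bound c" and t: "1 \<le> t"
  shows "c \<le> (\<integral>\<omega>. dual_online t \<omega> \<partial>M)"
proof -
  have "Suc (t - 1) = t" using t by simp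
  then have [measurable]: "Qh g t \<in> borel_measurable (history M S W (t - 1))"
      "Qc g t \<in> borel_measurable (history M S W (t - 1))" for g
    using Q_measurable_history[of g "t - 1"] by simp_all
  define f where "f \<omega> s = slot_dual m (pr s) (\<lambda>g. ah g s) (\<lambda>g. ac g s) (\<lambda>g. Qh g t \<omega> / V) (\<lambda>g. Qc g t \<omega> / V)" for \<omega> s
  have "c \<le> (\<integral>\<omega>. f \<omega> (W t \<omega>) \<partial>M)"
  proof (rule integral_ge_if_indep[OF subalgebra_history[OF W_measurable] W_measurable indep_set_history[OF W_measurable W_indep t]])
    show "(\<lambda>(\<omega>, s). f \<omega> s) \<in> borel_measurable (history M S W (t - 1) \<Otimes>\<^sub>M S)"
      unfolding f_def slot_dual_def by measurable
    fix \<omega> s assume "\<omega> \<in> space M" "s \<in> space S"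
    then show "\<bar>f \<omega> s\<bar> \<le> (\<Sum>g\<in>UNIV. (pmax + real t * ahmax g / V + real t * acmax g / V) * m g
      + real t * ahmax g / V * ahmax g + real t * acmax g / V * acmax g)"
      unfolding f_def by (intro abs_slot_dual_state_le multipliers_bounded)
  next
    fix \<omega> assume "\<omega> \<in> space M"
    then show "c \<le> (\<integral>\<omega>'. f \<omega> (W t \<omega>') \<partial>M)"
      unfolding f_def integral_slot_dual_eq_dual[OF t] using multipliers_bounded by (intro c[unfolded dual_lower_bound_def, rule_format]) auto
  qed
  then show ?thesis unfolding f_def dual_online_def .
qed

lemma expected_lyap_le:
  assumes c: "dual_lower_bound c"
  shows "(\<integral>\<omega>. lyap (Suc T) \<omega> \<partial>M)
    \<le> real T * A1 xhmax ahmax xcmax acmax + V * (\<Sum>t=1..T. \<integral>\<omega>. flex_online t \<omega> \<partial>M) - V * real T * c"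
proof (induction T)
  case 0
  have "lyap (Suc 0) = (\<lambda>_. 0)" by (simp add: fun_eq_iff lyap_def lyapunov_def Qh_def Qc_def)
  then show ?case by simp
next
  case (Suc T)
  have t: "1 \<le> Suc T" by simp
  have "(\<integral>\<omega>. lyap (Suc (Suc T)) \<omega> \<partial>M) - (\<integral>\<omega>. lyap (Suc T) \<omega> \<partial>M)
      = (\<integral>\<omega>. lyap (Suc (Suc T)) \<omega> - lyap (Suc T) \<omega> \<partial>M)"
    using integrable_lyap by simp
  also have "\<dots> \<le> (\<integral>\<omega>. A1 xhmax ahmax xcmax acmax + V * flex_online (Suc T) \<omega> - V * dual_online (Suc T) \<omega> \<partial>M)"
    using integrable_lyap integrable_flex_online[OF t] integrable_dual_online drift_plus_penalty[OF t]
    by (intro integral_mono) auto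
  also have "\<dots> = A1 xhmax ahmax xcmax acmax + V * (\<integral>\<omega>. flex_online (Suc T) \<omega> \<partial>M) - V * (\<integral>\<omega>. dual_online (Suc T) \<omega> \<partial>M)"
    using integrable_flex_online[OF t] integrable_dual_online by (simp add: prob_space)
  also have "\<dots> \<le> A1 xhmax ahmax xcmax acmax + V * (\<integral>\<omega>. flex_online (Suc T) \<omega> \<partial>M) - V * c"
    using integral_dual_online_ge[OF c t] V_pos by simp
  finally show ?case
    using Suc.IH by (simp add: algebra_simps)
qed

lemma avg_flex_online_ge:
  assumes c: "dual_lower_bound c" and T: "1 \<le> T"
  shows "c - A1 xhmax ahmax xcmax acmax / V \<le> avg_flex M pr W xh xc T"
proof -
  have "0 \<le> (\<integral>\<omega>. lyap (Suc T) \<omega> \<partial>M)"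
    unfolding lyap_def by (intro integral_nonneg_AE AE_I2 lyapunov_nonneg)
  with expected_lyap_le[OF c, of T]
  have "V * real T * c - real T * A1 xhmax ahmax xcmax acmax \<le> V * (\<Sum>t=1..T. \<integral>\<omega>. flex_online t \<omega> \<partial>M)"
    by linarith
  then have "real T * (c - A1 xhmax ahmax xcmax acmax / V) \<le> (\<Sum>t=1..T. \<integral>\<omega>. flex_online t \<omega> \<partial>M)"
    using V_pos by (simp add: field_simps)
  then have "c - A1 xhmax ahmax xcmax acmax / V \<le> (\<Sum>t=1..T. \<integral>\<omega>. flex_online t \<omega> \<partial>M) / real T"
    using T by (simp add: field_simps)
  then show ?thesis
    unfolding avg_flex_def flex_online_def .
qed

lemma flex_value_le_online:
  assumes "offline_feasible M W m ah ac yh yc"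
  shows "flex_value M pr W yh yc \<le> flex_value M pr W xh xc + ereal (A1 xhmax ahmax xcmax acmax / V)"
proof -
  obtain c where c: "flex_value M pr W yh yc = ereal c"
    using flex_value_ge[OF assms] flex_value_le_dual[OF assms, of "\<lambda>_. 0" "\<lambda>_. 0"]
    by (cases "flex_value M pr W yh yc") auto
  have c_le: "dual_lower_bound c"
    unfolding dual_lower_bound_def
  proof (intro allI impI)
    fix lh lc :: "'g \<Rightarrow> real" assume "\<forall>g. 0 \<le> lh g \<and> 0 \<le> lc g"
    then have "flex_value M pr W yh yc \<le> ereal (dual lh lc)"
      by (intro flex_value_le_dual[OF assms]) auto
    then show "c \<le> dual lh lc" using c by simp
  qed
  have "eventually (\<lambda>T. ereal (c - A1 xhmax ahmax xcmax acmax / V) \<le> ereal (avg_flex M pr W xh xc T)) sequentially"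
    using eventually_ge_at_top[of 1] by eventually_elim (simp add: avg_flex_online_ge[OF c_le])
  then have "ereal (c - A1 xhmax ahmax xcmax acmax / V) \<le> flex_value M pr W xh xc"
    unfolding flex_value_def by (rule Liminf_bounded)
  then have "ereal (c - A1 xhmax ahmax xcmax acmax / V) + ereal (A1 xhmax ahmax xcmax acmax / V)
      \<le> flex_value M pr W xh xc + ereal (A1 xhmax ahmax xcmax acmax / V)"
    by (rule add_right_mono)
  then show ?thesis
    unfolding c by simp
qed

lemma expected_lyap_le_linear:
  assumes "offline_feasible M W m ah ac yh yc"
  shows "(\<integral>\<omega>. lyap (Suc T) \<omega> \<partial>M) \<le> real T * (A1 xhmax ahmax xcmax acmax + 2 * V * Fmax)"
proof -
  have "(\<integral>\<omega>. flex_online t \<omega> \<partial>M) \<le> Fmax" if "t \<in> {1..T}" for t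
  proof (rule integral_le_const)
    show "integrable M (flex_online t)" using that by (intro integrable_flex_online) simp
    show "AE \<omega> in M. flex_online t \<omega> \<le> Fmax"
      using that abs_flex_W_le[OF online_feasible_action] by (intro AE_I2) (auto simp: flex_online_def abs_le_iff)
  qed
  then have "V * (\<Sum>t=1..T. \<integral>\<omega>. flex_online t \<omega> \<partial>M) \<le> V * (real T * Fmax)"
    using sum_mono[of "{1..T}" _ "\<lambda>_. Fmax"] V_pos by (intro mult_left_mono) auto
  then show ?thesis
    using expected_lyap_le[OF dual_lower_bound_Fmax[OF assms], of T] by (simp add: algebra_simps)
qed

lemma Q_square_le_lyap: "(Qh g t \<omega>)\<^sup>2 \<le> 2 * lyap t \<omega> \<and> (Qc g t \<omega>)\<^sup>2 \<le> 2 * lyap t \<omega>"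
proof -
  have "(Qh g t \<omega>)\<^sup>2 + (Qc g t \<omega>)\<^sup>2 \<le> (\<Sum>g'\<in>UNIV. (Qh g' t \<omega>)\<^sup>2 + (Qc g' t \<omega>)\<^sup>2)"
    by (rule member_le_sum) auto
  then show ?thesis
    unfolding lyap_def lyapunov_def using zero_le_power2[of "Qh g t \<omega>"] zero_le_power2[of "Qc g t \<omega>"] by linarith
qed

lemma avg_gap_online_le:
  assumes "offline_feasible M W m ah ac yh yc" and T: "1 \<le> T"
  shows "avg_gap M (ah g) W (xh g) T \<le> (A1 xhmax ahmax xcmax acmax + 2 * V * Fmax + 1 / 2) / sqrt T"
    and "avg_gap M (ac g) W (xc g) T \<le> (A1 xhmax ahmax xcmax acmax + 2 * V * Fmax + 1 / 2) / sqrt T"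
  unfolding avg_gap_def
  by (rule avg_gap_le_if_queue_square_le[where L = "lyap (Suc T)"];
      use integrable_arrivals integrable_online integrable_Q integrable_lyap Q_square_le_lyap
        expected_lyap_le_linear[OF assms(1)] T in \<open>auto simp: Qh_def[symmetric] Qc_def[symmetric]\<close>)+

lemma online_offline_feasible:
  assumes "offline_feasible M W m ah ac yh yc"
  shows "offline_feasible M W m ah ac xh xc"
proof -
  have "limsup (\<lambda>T. ereal (avg_gap M (ah g) W (xh g) T)) \<le> 0 \<and> limsup (\<lambda>T. ereal (avg_gap M (ac g) W (xc g) T)) \<le> 0" for g
    using avg_gap_online_le[OF assms]
    by (intro conjI limsup_nonpos_if_le_div_sqrt eventually_mono[OF eventually_ge_at_top[of 1]]) auto
  then show ?thesis
    unfolding offline_feasible_def avg_constraints_def using online_feasible_action by auto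
qed
lemma flex_value_online_bounds:
  assumes "offline_feasible M W m ah ac yh yc"
  shows "flex_value M pr W xh xc \<le> F_off M pr W m ah ac
    \<and> F_off M pr W m ah ac \<le> flex_value M pr W xh xc + ereal (A1 xhmax ahmax xcmax acmax / V)"
proof
  show "flex_value M pr W xh xc \<le> F_off M pr W m ah ac"
    unfolding F_off_def using online_offline_feasible[OF assms]
    by (intro SUP_upper2[of "(xh, xc)"]) simp_all
  show "F_off M pr W m ah ac \<le> flex_value M pr W xh xc + ereal (A1 xhmax ahmax xcmax acmax / V)"
    unfolding F_off_def
  proof (rule SUP_least)
    fix p assume "p \<in> {(yh, yc). offline_feasible M W m ah ac yh yc}"
    then show "flex_value M pr W (fst p) (snd p) \<le> flex_value M pr W xh xc + ereal (A1 xhmax ahmax xcmax acmax / V)"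
      by (cases p) (simp add: flex_value_le_online)
  qed
qed

end

lemma abs_price_le:
  assumes "\<bar>pe s\<bar> \<le> B" "\<bar>pc s\<bar> \<le> B" "\<bar>rho s\<bar> \<le> B"
  shows "\<bar>price pe pc rho s\<bar> \<le> B + B * B"
proof -
  have "\<bar>pc s * rho s\<bar> \<le> B * B"
    unfolding abs_mult using assms by (intro mult_mono) auto
  then show ?thesis
    unfolding price_def using assms(1) abs_triangle_ineq[of "pe s" "pc s * rho s"] by linarith
qed

lemma xmax_nonneg: "(\<And>v. v \<in> EV \<Longrightarrow> 0 \<le> pbar v) \<Longrightarrow> 0 \<le> xmax EV grp pbar g"
  unfolding xmax_def by (intro sum_nonneg) auto

theorem proposition2:
  fixes M :: "'w measure" and S :: "'s measure" and W :: "nat \<Rightarrow> 'w \<Rightarrow> 's"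
    and pe pc rho :: "'s \<Rightarrow> real"
    and ah ac :: "'g::finite \<Rightarrow> 's \<Rightarrow> real"
    and EV :: "'v set" and grp :: "'v \<Rightarrow> 'g" and pbar :: "'v \<Rightarrow> real"
    and V1 :: real
    and xhmax xcmax ahmax acmax :: "'g \<Rightarrow> real"
    and xh xc :: "'g \<Rightarrow> nat \<Rightarrow> 'w \<Rightarrow> real"
  assumes "prob_space M"
    and "\<And>t. W t \<in> measurable M S"
    and "prob_space.indep_vars M (\<lambda>_. S) W {1..}"
    and "\<And>t. t \<ge> 1 \<Longrightarrow> distr M S (W t) = distr M S (W 1)"
    and "pe \<in> borel_measurable S" and "pc \<in> borel_measurable S" and "rho \<in> borel_measurable S"
    and "\<exists>B. \<forall>s\<in>space S. \<bar>pe s\<bar> \<le> B \<and> \<bar>pc s\<bar> \<le> B \<and> \<bar>rho s\<bar> \<le> B"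
    and "\<And>g. ah g \<in> borel_measurable S" and "\<And>g. ac g \<in> borel_measurable S"
    and "\<And>g s. s \<in> space S \<Longrightarrow> 0 \<le> ah g s \<and> ah g s \<le> ahmax g"
    and "\<And>g s. s \<in> space S \<Longrightarrow> 0 \<le> ac g s \<and> ac g s \<le> acmax g"
    and "finite EV" and "\<And>v. v \<in> EV \<Longrightarrow> 0 \<le> pbar v"
    and "\<And>g. xmax EV grp pbar g \<le> xhmax g" and "\<And>g. xmax EV grp pbar g \<le> xcmax g"
    and "V1 > 0"
    and "\<exists>yh yc. offline_feasible M W (xmax EV grp pbar) ah ac yh yc"
    and "online_policy M S W V1 (price pe pc rho) (xmax EV grp pbar) ah ac xh xc"
  shows "flex_value M (price pe pc rho) W xh xc \<le> F_off M (price pe pc rho) W (xmax EV grp pbar) ah ac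
       \<and> F_off M (price pe pc rho) W (xmax EV grp pbar) ah ac
           \<le> flex_value M (price pe pc rho) W xh xc + ereal (A1 xhmax ahmax xcmax acmax / V1)"
proof -
  obtain B where B: "\<forall>s\<in>space S. \<bar>pe s\<bar> \<le> B \<and> \<bar>pc s\<bar> \<le> B \<and> \<bar>rho s\<bar> \<le> B"
    using assms(8) by blast
  have price_measurable: "price pe pc rho \<in> borel_measurable S"
    unfolding price_def[abs_def] using assms(5-7) by (intro borel_measurable_add borel_measurable_times)
  interpret online_flex_model M S W "price pe pc rho" "B + B * B" "xmax EV grp pbar" ah ac ahmax acmax
      V1 xh xc xhmax xcmax
  proof (intro online_flex_model.intro flex_model.intro flex_model_axioms.intro online_flex_model_axioms.intro)
    show "\<bar>price pe pc rho s\<bar> \<le> B + B * B" if "s \<in> space S" for s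
      using B that by (intro abs_price_le) auto
    show "0 \<le> xmax EV grp pbar g" for g
      using assms(14) by (rule xmax_nonneg)
  qed (fact assms price_measurable)+
  obtain yh yc where "offline_feasible M W (xmax EV grp pbar) ah ac yh yc"
    using assms(18) by blast
  then show ?thesis
    by (rule flex_value_online_bounds)
qed

end
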